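(* For every integer $d\ge0$, the Legendre basis matrix $B^{(d)}$ is $(d+1)$-banded: $b^{(d)}_{k,\ell}=0$ whenever $|k-\ell|>d+1$.
   Context: Let $\{p_k\}_{k\ge0}$ be the orthonormal Legendre polynomials on $[-1,1]$: $p_k$ has exact degree $k$, positive leading coefficient, and $\int_{-1}^1 p_k(t)p_\ell(t)\,dt=\delta_{k\ell}$. Let $\Theta$ be the Heaviside function, $\Theta(x)=0$ for $x<0$ and $\Theta(x)=1$ for $x\ge0$. The Legendre basis matrix of degree $d$ is the infinite matrix $B^{(d)}=[b^{(d)}_{k,\ell}]_{k,\ell\ge0}$ with $b^{(d)}_{k,\ell}=\int_{-1}^1\int_{-1}^1 p_d(\tau)\Theta(\tau-\rho)p_k(\tau)p_\ell(\rho)\,d\rho\,d\tau$, i.e. the coefficient matrix of $p_d(t)\Theta(t-s)$. *)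

theory Defs
  imports "HOL-Analysis.Analysis" "HOL-Computational_Algebra.Polynomial"
begin

definition heaviside :: "real \<Rightarrow> real" where
  "heaviside x = (if x < 0 then 0 else 1)"

definition orthonormal_legendre :: "(nat \<Rightarrow> real poly) \<Rightarrow> bool" where
  "orthonormal_legendre p \<longleftrightarrow>
     (\<forall>k. degree (p k) = k \<and> lead_coeff (p k) > 0) \<and>
     (\<forall>k l. integral {-1..1} (\<lambda>t. poly (p k) t * poly (p l) t) = (if k = l then 1 else 0))"

definition legendre_basis_entry :: "(nat \<Rightarrow> real poly) \<Rightarrow> nat \<Rightarrow> nat \<Rightarrow> nat \<Rightarrow> real" where
  "legendre_basis_entry p d k l =
     integral {-1..1} (\<lambda>\<tau>. integral {-1..1} (\<lambda>\<rho>.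
        poly (p d) \<tau> * heaviside (\<tau> - \<rho>) * poly (p k) \<tau> * poly (p l) \<rho>))"

end

theory Submission
  imports Defs
begin

text \<open>Integrating against the Heaviside kernel replaces \<open>p\<^sub>l\<close> by its primitive \<open>P\<^sub>l\<close> vanishing
  at \<open>-1\<close>, so the entry becomes \<open>\<integral> p\<^sub>d p\<^sub>k P\<^sub>l\<close>, with \<open>deg P\<^sub>l \<le> l + 1\<close>. If \<open>k > l + d + 1\<close>
  this vanishes because \<open>p\<^sub>k\<close> is orthogonal to all polynomials of lower degree. If \<open>l > k + d + 1\<close>,
  integrate by parts against a primitive \<open>Q\<close> of \<open>p\<^sub>d p\<^sub>k\<close>: the boundary term vanishes since
  \<open>P\<^sub>l(1) = \<integral> p\<^sub>l \<cdot> 1 = 0\<close>, and \<open>\<integral> Q p\<^sub>l = 0\<close> because \<open>deg Q \<le> k + d + 1 < l\<close>.\<close>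

lemma integrable_poly: "(\<lambda>x. poly q x) integrable_on {a..b::real}"
  by (intro integrable_continuous_interval continuous_intros)

lemma integral_poly_pderiv:
  assumes "a \<le> (b::real)"
  shows "integral {a..b} (\<lambda>x. poly (pderiv F) x) = poly F b - poly F a"
proof -
  have "((\<lambda>x. poly (pderiv F) x) has_integral (poly F b - poly F a)) {a..b}"
    by (intro fundamental_theorem_of_calculus assms)
      (metis has_real_derivative_iff_has_vector_derivative has_field_derivative_at_within poly_DERIV)
  then show ?thesis
    by (rule integral_unique)
qed

lemma integral_poly_add:
  fixes q r :: "real poly"
  shows "integral {a..b} (\<lambda>x. poly (q + r) x) = integral {a..b} (\<lambda>x. poly q x) + integral {a..b} (\<lambda>x. poly r x)"
  unfolding poly_add by (rule integral_add; rule integrable_poly)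

lemma integral_poly_smult:
  fixes q :: "real poly"
  shows "integral {a..b} (\<lambda>x. poly (smult c q) x) = c * integral {a..b} (\<lambda>x. poly q x)"
  by simp

lemma integral_poly_by_parts:
  assumes "a \<le> (b::real)"
  shows "integral {a..b} (\<lambda>x. poly (F * pderiv G) x)
    = poly (F * G) b - poly (F * G) a - integral {a..b} (\<lambda>x. poly (pderiv F * G) x)"
proof -
  have "pderiv (F * G) = F * pderiv G + pderiv F * G"
    by (simp add: pderiv_mult algebra_simps)
  then have "integral {a..b} (\<lambda>x. poly (F * pderiv G) x) + integral {a..b} (\<lambda>x. poly (pderiv F * G) x)
      = poly (F * G) b - poly (F * G) a"
    using integral_poly_pderiv[OF assms, of "F * G"] by (simp only: integral_poly_add)
  then show ?thesis
    by simp
qed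

lemma pderiv_surj: "\<exists>A. pderiv A = (q :: 'a :: field_char_0 poly)"
proof -
  let ?A = "\<Sum>i\<le>degree q. monom (coeff q i / of_nat (Suc i)) (Suc i)"
  have "pderiv ?A = (\<Sum>i\<le>degree q. pderiv (monom (coeff q i / of_nat (Suc i)) (Suc i)))"
    using higher_pderiv_sum[of 1] by simp
  also have "\<dots> = (\<Sum>i\<le>degree q. monom (coeff q i) i)"
    by (intro sum.cong refl) (simp add: pderiv_monom del: of_nat_Suc)
  also have "\<dots> = q"
    by (rule poly_as_sum_of_monoms)
  finally show ?thesis
    by blast
qed

lemma obtain_primitive_poly:
  fixes q :: "'a :: field_char_0 poly"
  obtains A where "pderiv A = q" and "poly A a = 0"
proof -
  obtain B where B: "pderiv B = q"
    using pderiv_surj by blast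
  show ?thesis
    by (rule that[of "B - [:poly B a:]"]) (simp_all add: pderiv_diff B)
qed

lemma degree_le_degree_pderiv_Suc: "degree A \<le> degree (pderiv A) + 1"
  for A :: "'a::{comm_semiring_1,semiring_no_zero_divisors,semiring_char_0} poly"
  unfolding degree_pderiv by linarith

lemma legendre_basis_entry_primitive:
  assumes "pderiv P = p l" and "poly P (-1) = 0"
  shows "legendre_basis_entry p d k l = integral {-1..1} (\<lambda>t. poly (p d * p k * P) t)"
  unfolding legendre_basis_entry_def
proof (rule integral_cong)
  fix \<tau> :: real
  assume \<tau>: "\<tau> \<in> {-1..1}"
  have "(\<lambda>\<rho>. poly (p d) \<tau> * heaviside (\<tau> - \<rho>) * poly (p k) \<tau> * poly (p l) \<rho>)
      = (\<lambda>\<rho>. (poly (p d) \<tau> * poly (p k) \<tau>) * (if \<rho> \<in> {..\<tau>} then poly (p l) \<rho> else 0))"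
    by (auto simp: heaviside_def)
  then have "integral {-1..1} (\<lambda>\<rho>. poly (p d) \<tau> * heaviside (\<tau> - \<rho>) * poly (p k) \<tau> * poly (p l) \<rho>)
      = (poly (p d) \<tau> * poly (p k) \<tau>) * integral ({..\<tau>} \<inter> {-1..1}) (\<lambda>\<rho>. poly (p l) \<rho>)"
    by (simp only: integral_mult_right integral_restrict_Int)
  also have "{..\<tau>} \<inter> {-1..1} = {-1..\<tau>}"
    using \<tau> by auto
  also have "integral {-1..\<tau>} (\<lambda>\<rho>. poly (p l) \<rho>) = poly P \<tau>"
    using integral_poly_pderiv[of "-1" \<tau> P] \<tau> assms by simp
  finally show "integral {-1..1} (\<lambda>\<rho>. poly (p d) \<tau> * heaviside (\<tau> - \<rho>) * poly (p k) \<tau> * poly (p l) \<rho>)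
      = poly (p d * p k * P) \<tau>"
    by simp
qed

lemma orthonormal_legendre_degree: "orthonormal_legendre p \<Longrightarrow> degree (p n) = n"
  unfolding orthonormal_legendre_def by blast

lemma orthonormal_legendre_orthogonal_lower_degree:
  assumes L: "orthonormal_legendre p" and "degree q < k"
  shows "integral {-1..1} (\<lambda>t. poly (p k * q) t) = 0"
  using assms(2)
proof (induction "degree q" arbitrary: q rule: less_induct)
  case less
  have deg: "degree (p n) = n" for n
    using L by (rule orthonormal_legendre_degree)
  have lc: "lead_coeff (p n) > 0" for n
    using L unfolding orthonormal_legendre_def by blast
  have orth: "integral {-1..1} (\<lambda>t. poly (p k) t * poly (p n) t) = 0" if "n \<noteq> k" for n
    using L that unfolding orthonormal_legendre_def by auto
  show ?case
  proof (cases "q = 0")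
    case False
    define n where "n = degree q"
    define c where "c = lead_coeff q / lead_coeff (p n)"
    define r where "r = q - smult c (p n)"
    have "degree r < degree q \<or> r = 0"
    proof (rule disjCI)
      assume "r \<noteq> 0"
      moreover have "degree r \<le> degree q"
        by (simp add: r_def n_def deg degree_diff_le degree_smult_le)
      moreover have "coeff r (degree q) = 0"
        using lc[of n] by (simp add: r_def c_def n_def deg)
      ultimately show "degree r < degree q"
        by (metis degree_less_if_less_eqI)
    qed
    then have r: "integral {-1..1} (\<lambda>t. poly (p k * r) t) = 0"
      using less.hyps[of r] less.prems by fastforce
    have "p k * q = p k * r + smult c (p k * p n)"
      by (simp add: r_def algebra_simps)
    then have "integral {-1..1} (\<lambda>t. poly (p k * q) t)
        = integral {-1..1} (\<lambda>t. poly (p k * r) t) + c * integral {-1..1} (\<lambda>t. poly (p k * p n) t)"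
      by (simp only: integral_poly_add integral_poly_smult)
    also have "\<dots> = 0"
      using r orth[of n] less.prems by (simp add: n_def)
    finally show ?thesis .
  qed (simp add: poly_0 [abs_def])
qed

lemma legendre_basis_entry_eq_0_above_band:
  assumes L: "orthonormal_legendre p" and "k > l + d + 1"
  shows "legendre_basis_entry p d k l = 0"
proof -
  have deg: "degree (p n) = n" for n
    using L by (rule orthonormal_legendre_degree)
  obtain P where P: "pderiv P = p l" "poly P (-1) = 0"
    by (rule obtain_primitive_poly)
  have "degree P \<le> l + 1"
    using degree_le_degree_pderiv_Suc[of P] by (simp add: P deg)
  then have "degree (p d * P) < k"
    using degree_mult_le[of "p d" P] assms(2) by (simp add: deg)
  then have "integral {-1..1} (\<lambda>t. poly (p k * (p d * P)) t) = 0"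
    by (rule orthonormal_legendre_orthogonal_lower_degree[OF L])
  then show ?thesis
    by (simp add: legendre_basis_entry_primitive[where p = p and l = l, OF P] ac_simps)
qed

lemma legendre_basis_entry_eq_0_below_band:
  assumes L: "orthonormal_legendre p" and "l > k + d + 1"
  shows "legendre_basis_entry p d k l = 0"
proof -
  have deg: "degree (p n) = n" for n
    using L by (rule orthonormal_legendre_degree)
  obtain P where P: "pderiv P = p l" "poly P (-1) = 0"
    by (rule obtain_primitive_poly)
  obtain Q where Q: "pderiv Q = p d * p k" "poly Q (-1) = 0"
    by (rule obtain_primitive_poly)
  have "integral {-1..1} (\<lambda>t. poly (p l * 1) t) = 0"
    using assms(2) by (intro orthonormal_legendre_orthogonal_lower_degree[OF L]) simp
  then have P1: "poly P 1 = 0"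
    using integral_poly_pderiv[of "-1" 1 P] P by simp
  have "degree Q \<le> k + d + 1"
    using degree_le_degree_pderiv_Suc[of Q] degree_mult_le[of "p d" "p k"] by (simp add: Q deg)
  then have "integral {-1..1} (\<lambda>t. poly (p l * Q) t) = 0"
    using assms(2) by (intro orthonormal_legendre_orthogonal_lower_degree[OF L]) simp
  moreover have "integral {-1..1} (\<lambda>t. poly (Q * pderiv P) t)
      = - integral {-1..1} (\<lambda>t. poly (p d * p k * P) t)"
    using integral_poly_by_parts[of "-1" 1 Q P] by (simp add: P P1 Q)
  ultimately show ?thesis
    by (simp add: legendre_basis_entry_primitive[where p = p and l = l, OF P] P mult.commute)
qed

theorem corollary3p4:
  fixes p :: "nat \<Rightarrow> real poly" and d k l :: nat
  assumes "orthonormal_legendre p"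
    and "\<bar>int k - int l\<bar> > int d + 1"
  shows "legendre_basis_entry p d k l = 0"
proof -
  from assms(2) consider "k > l + d + 1" | "l > k + d + 1"
    by linarith
  then show ?thesis
    using legendre_basis_entry_eq_0_above_band[OF assms(1)]
      legendre_basis_entry_eq_0_below_band[OF assms(1)]
    by cases
qed

end
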